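(* Let $(\mathscr N,K)$ be a power law kinetic system with a decomposition $\mathscr D:\mathscr N=\mathscr N_1\cup\cdots\cup\mathscr N_k$ such that each subsystem $(\mathscr N_i,K_i)$ is a weakly reversible, complex balanced PL-RDK system of CLP type with $P_{Z,i}=\widetilde S_i$. If $\mathscr D$ is incidence independent and the induced covering $\widetilde{\mathscr D}$ is independent, then $(\mathscr N,K)$ is a weakly reversible CLP system with $P_Z=\sum_{i=1}^k\widetilde S_i$.
   Context: A CRN $\mathscr N=(\mathscr S,\mathscr C,\mathscr R)$ has species $\mathscr S$, complexes $\mathscr C$ (vectors in $\mathbb Z_{\ge0}^{\mathscr S}$) and reactions $\mathscr R$; it is weakly reversible if every connected component of its reaction graph is strongly connected. A decomposition is given by a partition $\{\mathscr R_1,\dots,\mathscr R_k\}$ of $\mathscr R$, $\mathscr N_i$ having reactions $\mathscr R_i$ and complexes $\mathscr C_i$ those occurring in $\mathscr R_i$; $K_i$ is the restriction of the kinetics $K$ to $\mathscr R_i$. A power law kinetics assigns to reaction $R_j$ the rate $K_j(x)=k_jx^{F_{j,\cdot}}=k_j\prod_{s}x_s^{F_{js}}$ with $k_j>0$ and real kinetic order matrix $F$ (rows indexed by reactions). It is PL-RDK (reactant-determined) if any two reactions with the same reactant complex have identical rows of $F$; then each reactant complex $y$ has a kinetic complex $\widetilde y$ (the common row). The incidence map $I_a:\mathbb R^{\mathscr R}\to\mathbb R^{\mathscr C}$ sends $y\to y'$ to $\omega_{y'}-\omega_y$; $Z_+(\mathscr N,K)=\{x\in\mathbb R^{\mathscr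 S}_{>0}: I_aK(x)=0\}$ is the set of complex balanced equilibria, and the system is complex balanced if this set is nonempty. A system is of CLP type with subspace $P_Z\subseteq\mathbb R^{\mathscr S}$ if $Z_+\neq\varnothing$ and $Z_+=\{x\in\mathbb R^{\mathscr S}_{>0}:\log x-\log x^*\in P_Z^{\perp}\}$ for some (any) $x^*\in Z_+$. For a weakly reversible PL-RDK subsystem $(\mathscr N_i,K_i)$, its network of kinetic complexes $\widetilde{\mathscr N}_i$ has reactions $\widetilde y\to\widetilde{y'}$ for each $y\to y'\in\mathscr R_i$, and its kinetic order subspace is $\widetilde S_i=\operatorname{span}\{\widetilde{y'}-\widetilde y: y\to y'\in\mathscr R_i\}$. The induced covering $\widetilde{\mathscr D}$ is $\widetilde{\mathscr N}_{\mathscr D}=\widetilde{\mathscr N}_1\cup\cdots\cup\widetilde{\mathscr N}_k$; it is independent if the stoichiometric subspace of $\widetilde{\mathscr N}_{\mathscr D}$ (which is $\sum_i\widetilde S_i$) is the direct sum of the $\widetilde S_i$. $\mathscr D$ is incidence independent if $\operatorname{Im}I_a$ is the direct sum of the images of the incidence maps of the $\mathscr N_i$. *)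

theory Defs
  imports Complex_Main
begin

text \<open>
Model of a CRN: species form a finite type 's; complexes are vectors 's \<Rightarrow> nat;
reactions are indexed by elements of a finite set R of some type 'r, where
reaction r is  src r \<rightarrow> tgt r.  A power law kinetics is given by rate
constants k :: 'r \<Rightarrow> real and a kinetic order matrix F :: 'r \<Rightarrow> 's \<Rightarrow> real
(row F r).  A subnetwork is given by a subset of reactions; its complexes are
those occurring in its reactions, and its kinetics is the restriction.
\<close>

type_synonym 's complex = "'s \<Rightarrow> nat"

definition complexes :: "'r set \<Rightarrow> ('r \<Rightarrow> 's complex) \<Rightarrow> ('r \<Rightarrow> 's complex) \<Rightarrow> 's complex set" where
  "complexes R src tgt = src ` R \<union> tgt ` R"

definition reaction_graph :: "'r set \<Rightarrow> ('r \<Rightarrow> 's complex) \<Rightarrow> ('r \<Rightarrow> 's complex) \<Rightarrow> ('s complex \<times> 's complex) set" where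
  "reaction_graph R src tgt = {(src r, tgt r) | r. r \<in> R}"

definition weakly_reversible :: "'r set \<Rightarrow> ('r \<Rightarrow> 's complex) \<Rightarrow> ('r \<Rightarrow> 's complex) \<Rightarrow> bool" where
  "weakly_reversible R src tgt \<longleftrightarrow>
     (\<forall>c1 \<in> complexes R src tgt. \<forall>c2 \<in> complexes R src tgt.
        (c1, c2) \<in> (reaction_graph R src tgt \<union> (reaction_graph R src tgt)\<inverse>)\<^sup>* \<longrightarrow>
        (c1, c2) \<in> (reaction_graph R src tgt)\<^sup>*)"

text \<open>Incidence map I_a : R^R \<rightarrow> R^C, sending the basis vector of y \<rightarrow> y' to
\<omega>_{y'} - \<omega>_y (vectors over complexes represented as functions, zero off C).\<close>
definition incidence :: "'r set \<Rightarrow> ('r \<Rightarrow> 's complex) \<Rightarrow> ('r \<Rightarrow> 's complex) \<Rightarrow> ('r \<Rightarrow> real) \<Rightarrow> ('s complex \<Rightarrow> real)" where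
  "incidence R src tgt v =
     (\<lambda>c. \<Sum>r\<in>R. v r * ((if tgt r = c then 1 else 0) - (if src r = c then 1 else 0)))"

definition incidence_image :: "'r set \<Rightarrow> ('r \<Rightarrow> 's complex) \<Rightarrow> ('r \<Rightarrow> 's complex) \<Rightarrow> ('s complex \<Rightarrow> real) set" where
  "incidence_image R src tgt = range (incidence R src tgt)"

definition PL_rate :: "('r \<Rightarrow> real) \<Rightarrow> ('r \<Rightarrow> 's \<Rightarrow> real) \<Rightarrow> ('s::finite \<Rightarrow> real) \<Rightarrow> 'r \<Rightarrow> real" where
  "PL_rate k F x r = k r * (\<Prod>s\<in>UNIV. x s powr F r s)"

definition positive_vec :: "('s \<Rightarrow> real) \<Rightarrow> bool" where
  "positive_vec x \<longleftrightarrow> (\<forall>s. x s > 0)"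

definition Zplus :: "'r set \<Rightarrow> ('r \<Rightarrow> ('s::finite) complex) \<Rightarrow> ('r \<Rightarrow> 's complex) \<Rightarrow> ('r \<Rightarrow> real) \<Rightarrow> ('r \<Rightarrow> 's \<Rightarrow> real) \<Rightarrow> ('s \<Rightarrow> real) set" where
  "Zplus R src tgt k F = {x. positive_vec x \<and> incidence R src tgt (PL_rate k F x) = (\<lambda>_. 0)}"

definition complex_balanced :: "'r set \<Rightarrow> ('r \<Rightarrow> ('s::finite) complex) \<Rightarrow> ('r \<Rightarrow> 's complex) \<Rightarrow> ('r \<Rightarrow> real) \<Rightarrow> ('r \<Rightarrow> 's \<Rightarrow> real) \<Rightarrow> bool" where
  "complex_balanced R src tgt k F \<longleftrightarrow> Zplus R src tgt k F \<noteq> {}"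

definition orth :: "('s::finite \<Rightarrow> real) set \<Rightarrow> ('s \<Rightarrow> real) set" where
  "orth P = {v. \<forall>p\<in>P. (\<Sum>s\<in>UNIV. v s * p s) = 0}"

definition CLP :: "'r set \<Rightarrow> ('r \<Rightarrow> ('s::finite) complex) \<Rightarrow> ('r \<Rightarrow> 's complex) \<Rightarrow> ('r \<Rightarrow> real) \<Rightarrow> ('r \<Rightarrow> 's \<Rightarrow> real) \<Rightarrow> ('s \<Rightarrow> real) set \<Rightarrow> bool" where
  "CLP R src tgt k F PZ \<longleftrightarrow>
     Zplus R src tgt k F \<noteq> {} \<and>
     (\<exists>xs \<in> Zplus R src tgt k F.
        Zplus R src tgt k F = {x. positive_vec x \<and> (\<lambda>s. ln (x s) - ln (xs s)) \<in> orth PZ})"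

definition PL_kinetics :: "'r set \<Rightarrow> ('r \<Rightarrow> real) \<Rightarrow> bool" where
  "PL_kinetics R k \<longleftrightarrow> (\<forall>r\<in>R. k r > 0)"

definition PL_RDK :: "'r set \<Rightarrow> ('r \<Rightarrow> 's complex) \<Rightarrow> ('r \<Rightarrow> 's \<Rightarrow> real) \<Rightarrow> bool" where
  "PL_RDK R src F \<longleftrightarrow> (\<forall>r1\<in>R. \<forall>r2\<in>R. src r1 = src r2 \<longrightarrow> F r1 = F r2)"

definition kinetic_complex :: "'r set \<Rightarrow> ('r \<Rightarrow> 's complex) \<Rightarrow> ('r \<Rightarrow> 's \<Rightarrow> real) \<Rightarrow> 's complex \<Rightarrow> ('s \<Rightarrow> real)" where
  "kinetic_complex R src F y = F (SOME r. r \<in> R \<and> src r = y)"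

text \<open>Kinetic order subspace: span of the kinetic complex differences (finite generating
set, so the span is the set of linear combinations indexed by reactions).\<close>
definition kinetic_order_subspace :: "'r set \<Rightarrow> ('r \<Rightarrow> 's complex) \<Rightarrow> ('r \<Rightarrow> 's complex) \<Rightarrow> ('r \<Rightarrow> 's \<Rightarrow> real) \<Rightarrow> ('s \<Rightarrow> real) set" where
  "kinetic_order_subspace R src tgt F =
     {v. \<exists>c :: 'r \<Rightarrow> real. v = (\<lambda>s. \<Sum>r\<in>R. c r *
            (kinetic_complex R src F (tgt r) s - kinetic_complex R src F (src r) s))}"

definition subspace_sum :: "'i set \<Rightarrow> ('i \<Rightarrow> ('a \<Rightarrow> real) set) \<Rightarrow> ('a \<Rightarrow> real) set" where
  "subspace_sum I V = {w. \<exists>v. (\<forall>i\<in>I. v i \<in> V i) \<and> w = (\<lambda>a. \<Sum>i\<in>I. v i a)}"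

definition independent_family :: "'i set \<Rightarrow> ('i \<Rightarrow> ('a \<Rightarrow> real) set) \<Rightarrow> bool" where
  "independent_family I V \<longleftrightarrow>
     (\<forall>v. (\<forall>i\<in>I. v i \<in> V i) \<and> (\<lambda>a. \<Sum>i\<in>I. v i a) = (\<lambda>_. 0) \<longrightarrow> (\<forall>i\<in>I. v i = (\<lambda>_. 0)))"

definition is_direct_sum :: "('a \<Rightarrow> real) set \<Rightarrow> 'i set \<Rightarrow> ('i \<Rightarrow> ('a \<Rightarrow> real) set) \<Rightarrow> bool" where
  "is_direct_sum W I V \<longleftrightarrow> W = subspace_sum I V \<and> independent_family I V"

definition is_decomposition :: "'r set \<Rightarrow> 'r set set \<Rightarrow> bool" where
  "is_decomposition R D \<longleftrightarrow>
     (\<forall>A\<in>D. A \<noteq> {}) \<and> (\<forall>A\<in>D. \<forall>B\<in>D. A \<noteq> B \<longrightarrow> A \<inter> B = {}) \<and> \<Union>D = R"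

definition incidence_independent :: "'r set \<Rightarrow> ('r \<Rightarrow> 's complex) \<Rightarrow> ('r \<Rightarrow> 's complex) \<Rightarrow> 'r set set \<Rightarrow> bool" where
  "incidence_independent R src tgt D \<longleftrightarrow>
     is_direct_sum (incidence_image R src tgt) D (\<lambda>A. incidence_image A src tgt)"

text \<open>The induced covering of kinetic complex networks is independent: the stoichiometric
subspace of the union, \<Sum>_i S~_i, is the direct sum of the S~_i.\<close>
definition covering_independent :: "('r \<Rightarrow> 's complex) \<Rightarrow> ('r \<Rightarrow> 's complex) \<Rightarrow> ('r \<Rightarrow> 's \<Rightarrow> real) \<Rightarrow> 'r set set \<Rightarrow> bool" where
  "covering_independent src tgt F D \<longleftrightarrow>
     is_direct_sum (subspace_sum D (\<lambda>A. kinetic_order_subspace A src tgt F)) D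
                   (\<lambda>A. kinetic_order_subspace A src tgt F)"

end

theory Submission
  imports Defs "HOL-Analysis.Analysis"
begin

text \<open>
Incidence independence makes the complex balanced equilibria of the whole system exactly the
positive points that are complex balanced for every subsystem. By the CLP hypothesis, the
equilibria of the subsystem on the block \<open>A\<close> are the positive \<open>x\<close> with
\<open>log x \<in> y\<^sub>A + S\<^sub>A\<^sup>\<bottom>\<close>, where \<open>S\<^sub>A\<close> is its kinetic order subspace. Since the sum of the
\<open>S\<^sub>A\<close> is direct, the functionals \<open>\<langle>y\<^sub>A, _\<rangle>\<close> on the summands \<open>S\<^sub>A\<close> are restrictions of a single
functional \<open>\<langle>y, _\<rangle>\<close>, so all these affine conditions can be rewritten with the same base
point \<open>y\<close>, and their conjunction is \<open>log x \<in> y + (\<Sum>\<^sub>A S\<^sub>A)\<^sup>\<bottom>\<close>. Weak reversibility passes to the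
union because every reaction is reversed by a directed path inside its own block.
\<close>

lemma orthogonal_comp_sum_UNIV:
  fixes U V :: "'a::euclidean_space set"
  assumes "subspace U" "subspace V" "U \<inter> V = {0}"
  shows "U\<^sup>\<bottom> + V\<^sup>\<bottom> = UNIV"
proof -
  let ?S = "U\<^sup>\<bottom> + V\<^sup>\<bottom>"
  have "?S = {x + y |x y. x \<in> U\<^sup>\<bottom> \<and> y \<in> V\<^sup>\<bottom>}"
    by (auto simp: set_plus_def)
  then have "subspace ?S"
    by (simp add: subspace_sums subspace_orthogonal_comp)
  have "U\<^sup>\<bottom> \<subseteq> ?S" "V\<^sup>\<bottom> \<subseteq> ?S"
    using set_plus_intro[of _ "U\<^sup>\<bottom>" 0 "V\<^sup>\<bottom>"] set_plus_intro[of 0 "U\<^sup>\<bottom>" _ "V\<^sup>\<bottom>"]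
    by (auto simp: subspace_0 subspace_orthogonal_comp)
  then have "?S\<^sup>\<bottom> \<subseteq> U\<^sup>\<bottom>\<^sup>\<bottom> \<inter> V\<^sup>\<bottom>\<^sup>\<bottom>"
    by (auto dest: orthogonal_comp_anti_mono)
  then have "?S\<^sup>\<bottom> \<subseteq> {0}"
    using assms by (simp add: orthogonal_comp_self)
  then have "{0}\<^sup>\<bottom> \<subseteq> ?S\<^sup>\<bottom>\<^sup>\<bottom>"
    by (rule orthogonal_comp_anti_mono)
  then show ?thesis
    using orthogonal_comp_self[OF \<open>subspace ?S\<close>] by auto
qed

lemma span_UN_subspaces_imp_sum:
  fixes V :: "'i \<Rightarrow> 'a::real_vector set"
  assumes "finite I" "\<And>i. i \<in> I \<Longrightarrow> subspace (V i)" "x \<in> span (\<Union>i\<in>I. V i)"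
  shows "\<exists>v. (\<forall>i\<in>I. v i \<in> V i) \<and> x = (\<Sum>i\<in>I. v i)"
  using assms
proof (induction I arbitrary: x rule: finite_induct)
  case empty
  then show ?case by simp
next
  case (insert j I)
  have "x \<in> span (V j \<union> (\<Union>i\<in>I. V i))"
    using insert.prems(2) by simp
  then obtain a b where "a \<in> span (V j)" "b \<in> span (\<Union>i\<in>I. V i)" "x = a + b"
    unfolding span_Un by blast
  moreover have "span (V j) = V j"
    using insert.prems(1) by simp
  moreover obtain v where "\<forall>i\<in>I. v i \<in> V i" "b = (\<Sum>i\<in>I. v i)"
    using insert.IH insert.prems(1) \<open>b \<in> span (\<Union>i\<in>I. V i)\<close> by blast
  moreover have "(\<Sum>i\<in>I. (v(j := a)) i) = (\<Sum>i\<in>I. v i)"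
    using insert.hyps(2) by (intro sum.cong) auto
  ultimately show ?case
    using insert.hyps by (intro exI[of _ "v(j := a)"]) auto
qed

lemma independent_subspaces_common_point:
  fixes V :: "'i \<Rightarrow> 'a::euclidean_space set" and u :: "'i \<Rightarrow> 'a"
  assumes "finite I" "\<And>i. i \<in> I \<Longrightarrow> subspace (V i)"
    and "\<And>v. \<forall>i\<in>I. v i \<in> V i \<Longrightarrow> (\<Sum>i\<in>I. v i) = 0 \<Longrightarrow> \<forall>i\<in>I. v i = 0"
  shows "\<exists>y. \<forall>i\<in>I. y - u i \<in> (V i)\<^sup>\<bottom>"
  using assms
proof (induction I rule: finite_induct)
  case empty
  then show ?case by simp
next
  case (insert j I)
  have sum_update: "(\<Sum>i\<in>insert j I. if i = j then w else v i) = w + (\<Sum>i\<in>I. v i)" for v w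
  proof -
    have "(\<Sum>i\<in>I. if i = j then w else v i) = (\<Sum>i\<in>I. v i)"
      using insert.hyps(2) by (intro sum.cong) auto
    then show ?thesis
      using insert.hyps by simp
  qed
  have "\<forall>i\<in>I. v i = 0" if "\<forall>i\<in>I. v i \<in> V i" "(\<Sum>i\<in>I. v i) = 0" for v
  proof -
    have "\<forall>i\<in>insert j I. (v(j := 0)) i = 0"
      using that insert.prems by (intro insert.prems(2)) (auto simp: sum_update subspace_0)
    then show ?thesis
      using insert.hyps(2) by (metis fun_upd_other insertCI)
  qed
  then obtain y' where y': "\<forall>i\<in>I. y' - u i \<in> (V i)\<^sup>\<bottom>"
    using insert.IH insert.prems(1) by blast
  define U where "U = span (\<Union>i\<in>I. V i)"
  have "x = 0" if "x \<in> U" "x \<in> V j" for x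
  proof -
    obtain v where "\<forall>i\<in>I. v i \<in> V i" "x = (\<Sum>i\<in>I. v i)"
      using span_UN_subspaces_imp_sum insert.hyps(1) insert.prems(1) \<open>x \<in> U\<close>
      unfolding U_def by blast
    then have "\<forall>i\<in>insert j I. (v(j := - x)) i = 0"
      using that insert.prems by (intro insert.prems(2)) (auto simp: sum_update subspace_neg)
    then show ?thesis
      by simp
  qed
  then have "U \<inter> V j = {0}"
    using insert.prems(1) by (auto simp: U_def subspace_0)
  \<comment> \<open>Correcting \<open>y'\<close> by the \<open>U\<^sup>\<bottom>\<close>-part of \<open>u j - y'\<close> fixes the condition at \<open>j\<close>
    without disturbing those on \<open>I\<close>.\<close>
  then obtain a b where a: "a \<in> U\<^sup>\<bottom>" and b: "b \<in> (V j)\<^sup>\<bottom>" and ab: "u j - y' = a + b"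
    using orthogonal_comp_sum_UNIV[of U "V j"] insert.prems(1) unfolding U_def
    by (metis UNIV_I insertCI set_plus_elim subspace_span)
  have "y' + a - u i \<in> (V i)\<^sup>\<bottom>" if "i \<in> I" for i
  proof -
    have "U\<^sup>\<bottom> \<subseteq> (V i)\<^sup>\<bottom>"
      using that by (intro orthogonal_comp_anti_mono) (auto simp: U_def intro: span_base)
    then have "(y' - u i) + a \<in> (V i)\<^sup>\<bottom>"
      using a y' that by (simp add: subspace_add subspace_orthogonal_comp subset_iff)
    then show ?thesis
      by (simp add: algebra_simps)
  qed
  moreover have "y' + a - u j \<in> (V j)\<^sup>\<bottom>"
    using b ab subspace_neg[OF subspace_orthogonal_comp b] by (simp add: algebra_simps)
  ultimately show ?case
    by blast
qed

text \<open>Functions \<open>'s \<Rightarrow> real\<close> carry no \<open>euclidean_space\<close> instance, so the argument is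
transported to \<open>real^'s\<close> along \<open>vec_lambda\<close>.\<close>

lemma independent_family_common_orth_point:
  fixes W :: "'i \<Rightarrow> ('s::finite \<Rightarrow> real) set" and u :: "'i \<Rightarrow> 's \<Rightarrow> real"
  assumes "finite I" "\<And>i. i \<in> I \<Longrightarrow> subspace (vec_lambda ` W i)" "independent_family I W"
  shows "\<exists>y. \<forall>i\<in>I. (\<lambda>s. y s - u i s) \<in> orth (W i)"
proof -
  have "\<forall>i\<in>I. v i = 0" if "\<forall>i\<in>I. v i \<in> vec_lambda ` W i" "(\<Sum>i\<in>I. v i) = 0" for v
  proof -
    have "\<forall>i\<in>I. vec_nth (v i) \<in> W i"
      using that(1) by (auto simp: vec_lambda_inverse)
    moreover have "(\<lambda>s. \<Sum>i\<in>I. v i $ s) = (\<lambda>_. 0)"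
      using that(2) by (metis sum_component zero_index)
    ultimately have "\<forall>i\<in>I. vec_nth (v i) = (\<lambda>_. 0)"
      using assms(3) unfolding independent_family_def
      by (blast dest: spec[of _ "\<lambda>i. vec_nth (v i)"])
    then show ?thesis
      by (simp add: vec_eq_iff)
  qed
  then obtain y :: "real^'s" where y: "\<forall>i\<in>I. y - vec_lambda (u i) \<in> (vec_lambda ` W i)\<^sup>\<bottom>"
    using independent_subspaces_common_point[of I "\<lambda>i. vec_lambda ` W i" "\<lambda>i. vec_lambda (u i)"]
      assms(1,2) by blast
  have "(\<lambda>s. y $ s - u i s) \<in> orth (W i)" if "i \<in> I" for i
    using y that unfolding orth_def orthogonal_comp_def orthogonal_def
    by (auto simp: inner_vec_def mult.commute)
  then show ?thesis
    by blast
qed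

lemma orth_subspace_sum:
  assumes "finite I" "\<And>i. i \<in> I \<Longrightarrow> (\<lambda>_. 0) \<in> V i"
  shows "orth (subspace_sum I V) = {v. \<forall>i\<in>I. v \<in> orth (V i)}"
proof (intro set_eqI iffI)
  fix v
  assume v: "v \<in> orth (subspace_sum I V)"
  have "(\<Sum>s\<in>UNIV. v s * p s) = 0" if "i \<in> I" "p \<in> V i" for i p
  proof -
    have "p = (\<lambda>s. \<Sum>j\<in>I. (if j = i then p else (\<lambda>_. 0)) s)"
      using that assms(1) by (simp add: fun_eq_iff if_distrib[of "\<lambda>f. f _"] cong: if_cong)
    moreover have "\<forall>j\<in>I. (if j = i then p else (\<lambda>_. 0)) \<in> V j"
      using that assms(2) by auto
    ultimately have "p \<in> subspace_sum I V"
      unfolding subspace_sum_def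
      by (intro CollectI exI[of _ "\<lambda>j. if j = i then p else (\<lambda>_. 0)"] conjI) blast+
    then show ?thesis
      using v unfolding orth_def by blast
  qed
  then show "v \<in> {v. \<forall>i\<in>I. v \<in> orth (V i)}"
    unfolding orth_def by blast
next
  fix v
  assume v: "v \<in> {v. \<forall>i\<in>I. v \<in> orth (V i)}"
  have "(\<Sum>s\<in>UNIV. v s * (\<Sum>i\<in>I. w i s)) = 0" if "\<forall>i\<in>I. w i \<in> V i" for w
  proof -
    have "(\<Sum>s\<in>UNIV. v s * (\<Sum>i\<in>I. w i s)) = (\<Sum>i\<in>I. \<Sum>s\<in>UNIV. v s * w i s)"
      by (simp add: sum_distrib_left sum.swap[of _ UNIV I])
    also have "\<dots> = 0"
      using v that unfolding orth_def by simp
    finally show ?thesis .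
  qed
  then show "v \<in> orth (subspace_sum I V)"
    unfolding orth_def subspace_sum_def by blast
qed

lemma subspace_vec_lambda_combinations:
  "subspace (vec_lambda ` {v. \<exists>c. v = (\<lambda>s. \<Sum>r\<in>A. c r * d r s)} :: (real^'s::finite) set)"
  unfolding subspace_def
proof (intro conjI ballI allI)
  have "(\<lambda>_. 0) \<in> {v. \<exists>c. v = (\<lambda>s. \<Sum>r\<in>A. c r * d r s)}"
    by (intro CollectI exI[of _ "\<lambda>_. 0"]) simp
  then show "(0 :: real^'s) \<in> vec_lambda ` {v. \<exists>c. v = (\<lambda>s. \<Sum>r\<in>A. c r * d r s)}"
    by (rule image_eqI[rotated]) (simp add: vec_eq_iff)
next
  fix x y :: "real^'s"
  assume "x \<in> vec_lambda ` {v. \<exists>c. v = (\<lambda>s. \<Sum>r\<in>A. c r * d r s)}"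
    and "y \<in> vec_lambda ` {v. \<exists>c. v = (\<lambda>s. \<Sum>r\<in>A. c r * d r s)}"
  then obtain c c' where "x = vec_lambda (\<lambda>s. \<Sum>r\<in>A. c r * d r s)"
    and "y = vec_lambda (\<lambda>s. \<Sum>r\<in>A. c' r * d r s)"
    by blast
  then have "x + y = vec_lambda (\<lambda>s. \<Sum>r\<in>A. (c r + c' r) * d r s)"
    by (simp add: vec_eq_iff distrib_right sum.distrib)
  moreover have "(\<lambda>s. \<Sum>r\<in>A. (c r + c' r) * d r s) \<in> {v. \<exists>c. v = (\<lambda>s. \<Sum>r\<in>A. c r * d r s)}"
    by (intro CollectI exI[of _ "\<lambda>r. c r + c' r"] refl)
  ultimately show "x + y \<in> vec_lambda ` {v. \<exists>c. v = (\<lambda>s. \<Sum>r\<in>A. c r * d r s)}"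
    by (rule image_eqI)
next
  fix a :: real and x :: "real^'s"
  assume "x \<in> vec_lambda ` {v. \<exists>c. v = (\<lambda>s. \<Sum>r\<in>A. c r * d r s)}"
  then obtain c where "x = vec_lambda (\<lambda>s. \<Sum>r\<in>A. c r * d r s)"
    by blast
  then have "a *\<^sub>R x = vec_lambda (\<lambda>s. \<Sum>r\<in>A. (a * c r) * d r s)"
    by (simp add: vec_eq_iff sum_distrib_left mult.assoc)
  moreover have "(\<lambda>s. \<Sum>r\<in>A. (a * c r) * d r s) \<in> {v. \<exists>c. v = (\<lambda>s. \<Sum>r\<in>A. c r * d r s)}"
    by (intro CollectI exI[of _ "\<lambda>r. a * c r"] refl)
  ultimately show "a *\<^sub>R x \<in> vec_lambda ` {v. \<exists>c. v = (\<lambda>s. \<Sum>r\<in>A. c r * d r s)}"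
    by (rule image_eqI)
qed

lemma subspace_vec_lambda_kinetic_order_subspace:
  "subspace (vec_lambda ` kinetic_order_subspace A src tgt F)"
  unfolding kinetic_order_subspace_def by (rule subspace_vec_lambda_combinations)

lemma zero_in_kinetic_order_subspace: "(\<lambda>_. 0) \<in> kinetic_order_subspace A src tgt F"
  unfolding kinetic_order_subspace_def by (intro CollectI exI[of _ "\<lambda>_. 0"]) simp

lemma weakly_reversible_Union:
  assumes "\<And>A. A \<in> D \<Longrightarrow> weakly_reversible A src tgt"
  shows "weakly_reversible (\<Union>D) src tgt"
proof -
  let ?G = "reaction_graph (\<Union>D) src tgt"
  have "(tgt r, src r) \<in> ?G\<^sup>*" if "A \<in> D" "r \<in> A" for A r
  proof -
    let ?G\<^sub>A = "reaction_graph A src tgt"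
    have "(src r, tgt r) \<in> ?G\<^sub>A" "src r \<in> complexes A src tgt" "tgt r \<in> complexes A src tgt"
      using that(2) unfolding reaction_graph_def complexes_def by auto
    then have "(tgt r, src r) \<in> ?G\<^sub>A\<^sup>*"
      using assms[OF that(1)] unfolding weakly_reversible_def by blast
    moreover have "?G\<^sub>A \<subseteq> ?G"
      using that unfolding reaction_graph_def by blast
    ultimately show ?thesis
      using rtrancl_mono by blast
  qed
  then have "?G \<union> ?G\<inverse> \<subseteq> ?G\<^sup>*"
    unfolding reaction_graph_def by blast
  then have "(?G \<union> ?G\<inverse>)\<^sup>* \<subseteq> ?G\<^sup>*"
    by (rule rtrancl_subset_rtrancl)
  then show ?thesis
    unfolding weakly_reversible_def by blast
qed

lemma incidence_decomposition:
  assumes "finite R" "is_decomposition R D"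
  shows "incidence R src tgt v = (\<lambda>c. \<Sum>A\<in>D. incidence A src tgt v c)"
proof -
  have "\<Union>D = R" and disjoint: "\<forall>A\<in>D. \<forall>B\<in>D. A \<noteq> B \<longrightarrow> A \<inter> B = {}"
    using assms(2) unfolding is_decomposition_def by auto
  moreover have "\<forall>A\<in>D. finite A"
    using assms(1) \<open>\<Union>D = R\<close> by (auto intro: finite_subset)
  ultimately show ?thesis
    unfolding incidence_def \<open>\<Union>D = R\<close>[symmetric] by (subst sum.Union_disjoint) simp_all
qed

lemma Zplus_incidence_independent:
  assumes "finite R" "is_decomposition R D" "incidence_independent R src tgt D"
  shows "Zplus R src tgt k F = {x. positive_vec x} \<inter> (\<Inter>A\<in>D. Zplus A src tgt k F)"
proof (intro set_eqI iffI)
  fix x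
  assume x: "x \<in> Zplus R src tgt k F"
  let ?v = "\<lambda>A. incidence A src tgt (PL_rate k F x)"
  have "\<forall>A\<in>D. ?v A \<in> incidence_image A src tgt"
    unfolding incidence_image_def by blast
  moreover have "(\<lambda>c. \<Sum>A\<in>D. ?v A c) = (\<lambda>_. 0)"
    using x unfolding Zplus_def by (simp add: incidence_decomposition[OF assms(1,2)])
  ultimately have "\<forall>A\<in>D. ?v A = (\<lambda>_. 0)"
    using assms(3) unfolding incidence_independent_def is_direct_sum_def independent_family_def
    by (blast dest: spec[of _ ?v])
  then show "x \<in> {x. positive_vec x} \<inter> (\<Inter>A\<in>D. Zplus A src tgt k F)"
    using x unfolding Zplus_def by blast
next
  fix x
  assume "x \<in> {x. positive_vec x} \<inter> (\<Inter>A\<in>D. Zplus A src tgt k F)"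
  then show "x \<in> Zplus R src tgt k F"
    unfolding Zplus_def by (simp add: incidence_decomposition[OF assms(1,2)])
qed

definition log_coset :: "('s::finite \<Rightarrow> real) \<Rightarrow> ('s \<Rightarrow> real) set \<Rightarrow> ('s \<Rightarrow> real) set" where
  "log_coset y P = {x. positive_vec x \<and> (\<lambda>s. ln (x s) - y s) \<in> orth P}"

lemma log_coset_change_base_point:
  assumes "(\<lambda>s. z s - y s) \<in> orth P"
  shows "log_coset z P = log_coset y P"
proof -
  have "(\<Sum>s\<in>UNIV. (f s - y s) * p s) = (\<Sum>s\<in>UNIV. (f s - z s) * p s)" if "p \<in> P" for f p
  proof -
    have "(\<Sum>s\<in>UNIV. (f s - y s) * p s)
        = (\<Sum>s\<in>UNIV. (f s - z s) * p s) + (\<Sum>s\<in>UNIV. (z s - y s) * p s)"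
      by (simp add: sum.distrib[symmetric] algebra_simps)
    then show ?thesis
      using assms that unfolding orth_def by simp
  qed
  then show ?thesis
    unfolding log_coset_def orth_def by auto
qed

lemma CLP_iff_log_coset:
  "CLP R src tgt k F P \<longleftrightarrow> (\<exists>y. Zplus R src tgt k F = log_coset y P)"
proof
  assume "CLP R src tgt k F P"
  then obtain x\<^sub>0 where "Zplus R src tgt k F = log_coset (\<lambda>s. ln (x\<^sub>0 s)) P"
    unfolding CLP_def log_coset_def by blast
  then show "\<exists>y. Zplus R src tgt k F = log_coset y P"
    by (rule exI[of _ "\<lambda>s. ln (x\<^sub>0 s)"])
next
  assume "\<exists>y. Zplus R src tgt k F = log_coset y P"
  then obtain y where y: "Zplus R src tgt k F = log_coset y P" ..
  define x\<^sub>0 where "x\<^sub>0 s = exp (y s)" for s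
  have "x\<^sub>0 \<in> log_coset y P"
    by (simp add: log_coset_def x\<^sub>0_def positive_vec_def orth_def)
  then show "CLP R src tgt k F P"
    unfolding CLP_def using y by (auto simp: log_coset_def x\<^sub>0_def)
qed

theorem theorem10:
  fixes R :: "'r set" and src tgt :: "'r \<Rightarrow> ('s::finite) complex"
    and k :: "'r \<Rightarrow> real" and F :: "'r \<Rightarrow> 's \<Rightarrow> real" and D :: "'r set set"
  assumes "finite R"
    and "PL_kinetics R k"
    and "is_decomposition R D"
    and "\<And>A. A \<in> D \<Longrightarrow> weakly_reversible A src tgt"
    and "\<And>A. A \<in> D \<Longrightarrow> complex_balanced A src tgt k F"
    and "\<And>A. A \<in> D \<Longrightarrow> PL_RDK A src F"
    and "\<And>A. A \<in> D \<Longrightarrow> CLP A src tgt k F (kinetic_order_subspace A src tgt F)"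
    and "incidence_independent R src tgt D"
    and "covering_independent src tgt F D"
  shows "weakly_reversible R src tgt \<and>
         CLP R src tgt k F (subspace_sum D (\<lambda>A. kinetic_order_subspace A src tgt F))"
proof
  let ?K = "\<lambda>A. kinetic_order_subspace A src tgt F"
  have "\<Union>D = R"
    using assms(3) unfolding is_decomposition_def by blast
  then show "weakly_reversible R src tgt"
    using weakly_reversible_Union[of D src tgt] assms(4) by simp
  have "finite D"
    using assms(1) \<open>\<Union>D = R\<close> by (metis finite_UnionD)
  have "\<forall>A\<in>D. \<exists>y. Zplus A src tgt k F = log_coset y (?K A)"
    using assms(7) CLP_iff_log_coset by blast
  from bchoice[OF this] obtain y where y: "\<forall>A\<in>D. Zplus A src tgt k F = log_coset (y A) (?K A)"
    by blast
  have "independent_family D ?K"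
    using assms(9) unfolding covering_independent_def is_direct_sum_def by blast
  then obtain z where z: "\<forall>A\<in>D. (\<lambda>s. z s - y A s) \<in> orth (?K A)"
    using independent_family_common_orth_point[of D ?K y, OF \<open>finite D\<close>
        subspace_vec_lambda_kinetic_order_subspace] by blast
  have "Zplus A src tgt k F = log_coset z (?K A)" if "A \<in> D" for A
    using y z that log_coset_change_base_point[of z "y A" "?K A"] by simp
  then have "Zplus R src tgt k F = {x. positive_vec x} \<inter> (\<Inter>A\<in>D. log_coset z (?K A))"
    using Zplus_incidence_independent[OF assms(1,3,8)] by simp
  also have "\<dots> = log_coset z (subspace_sum D ?K)"
    using orth_subspace_sum[of D ?K, OF \<open>finite D\<close> zero_in_kinetic_order_subspace]
    by (auto simp: log_coset_def)
  finally show "CLP R src tgt k F (subspace_sum D ?K)"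
    unfolding CLP_iff_log_coset by (rule exI[of _ z])
qed

end
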